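(* Let $n\ge2$, let $X\subset\mathbb{R}^n$ be finite with the Euclidean metric $d$, let $k\in\mathbb{N}$, and fix an increasing sequence $0=\epsilon_0<\epsilon_1<\epsilon_2<\cdots$. For any $i\in\mathbb{N}$, any $\nu$ with $\epsilon_{i-1}<\nu\le\epsilon_i$, any $\alpha\ge0$ and any $p\ne q\in X$: \[ p,q \text{ lie in the same connected component of } H(i)_\nu \iff p,q \text{ lie in the same connected component of } G(X,\rho^X)_\nu, \] and \[ p,q \text{ lie in the same connected component of } \mathcal{F}(i)_\alpha \iff p,q \text{ lie in the same connected component of } G(X,\rho^X)_\alpha. \]
   Context: DBSCAN$^*$: for $Y\subset X$ and $\epsilon>0$, $\mathcal{C}(Y,\epsilon)=\{p\in Y:|\{y\in Y:d(p,y)\le\epsilon\}|>k\}$, $\mathcal{N}(Y,\epsilon)=Y\setminus\mathcal{C}(Y,\epsilon)$, and $\mathcal{D}^*(Y,\epsilon)$ is the set of vertex sets of the connected components of the graph with vertex set $\mathcal{C}(Y,\epsilon)$ and an edge between distinct $p,q$ whenever $d(p,q)\le\epsilon$. For $Z\subset X$ and $p\in Z$, $\operatorname{core}^Z_k(p)$ is the distance from $p$ to a $k$-th nearest neighbour of $p$ in $Z$ (the $k$-th smallest value of $d(p,z)$, $z\in Z\setminus\{p\}$, with multiplicity) and $\rho^Z(p,q)=\max\{\operatorname{core}^Z_k(p),\operatorname{core}^Z_k(q),d(p,q)\}$ for $p\ne q$, $\rho^Z(p,p)=0$. Cubes (for a given $\epsilon>0$): $\mathcal{Q}(\epsilon)$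 is the collection of closed cubes $\{x\in\mathbb{R}^n: j_i\frac{\epsilon}{2\sqrt n}\le x_i\le (j_i+1)\frac{\epsilon}{2\sqrt n}\}$, $j\in\mathbb{Z}^n$; $S^m=\{x:\max_i|x_i-s_i|\le m\frac{\epsilon}{2\sqrt n}\text{ for some }s\in S\}$; $\mathcal{I}(B)=\{S\in\mathcal{Q}(\epsilon):S\cap B\ne\emptyset\}$. For $A\subset X$, $S\in\mathcal{I}(A)$ is an interior cube of $A$ if $S^1\cap X\subset A$ and every $T\in\mathcal{Q}(\epsilon)$ with $T\subset S^1$ lies in $\mathcal{I}(A)$, otherwise a boundary cube; $\partial A$ is the union of boundary cubes. For $Z\subset\mathbb{R}^n$, integer $N\ge0$: $Z^N=\bigcup_{S\in\mathcal{I}(Z)}S^N$, $Z^N_C=Z^N\cap C$. $\mathfrak{n},\mathfrak{m}$ are the smallest integers with $\mathfrak{n}\ge\sqrt n-1$, $\mathfrak{m}\ge2\sqrt n$; $\mathfrak{N}=\mathfrak{n}+\mathfrak{m}$. $F(Y,\epsilon)=\bigcup_{C\in\mathcal{D}^*(Y,\epsilon)}(\partial C)^{\mathfrak{N}}_C\cup\mathcal{N}(Y,\epsilon)$, cubes in $\mathcal{Q}(\epsilon)$. Graphs: $G(Z,w)$ is the complete weighted graph on finite $Z$ with weights $w(p,q)$; for a weighted graph $G$ and $\alpha\ge0$, $G_\alpha$ has the same vertex set and only the edges of weight $\le\alpha$. The union $G\cup H$ of weighted graphs has vertex set $V(G)\cup V(H)$, edge set $E(G)\cup E(H)$, and weight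 on a common edge the minimum of the two weights. Construction: $X_1=X$, $X_{i+1}=F(X_i,\epsilon_i)$ for $i\ge1$; $H(0)$ is the graph on $X_1$ with no edges; for $i\ge0$, $H(i+1)=\bigcup_{C\in\mathcal{D}^*(X_{i+1},\epsilon_{i+1})}G\big(B_{\epsilon_{i+1}}(C),\rho^{B_{\epsilon_{i+1}}(C)}\big)_{\epsilon_{i+1}}\cup H(i)$, where $B_{\epsilon_{i+1}}(C)=\{y\in X_{i+1}: d(y,C)\le\epsilon_{i+1}\}$. Finally $\mathcal{F}(i)=G(X_{i+1},\rho^{X_{i+1}})\cup H(i)$. *)

theory Defs
  imports "HOL-Analysis.Analysis" "HOL-Library.Extended_Real" "HOL-Library.Multiset"
begin

definition core_pts :: "nat \<Rightarrow> ('a::metric_space) set \<Rightarrow> real \<Rightarrow> 'a set" where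
  "core_pts k Y e = {p \<in> Y. card {y \<in> Y. dist p y \<le> e} > k}"

definition noise_pts :: "nat \<Rightarrow> ('a::metric_space) set \<Rightarrow> real \<Rightarrow> 'a set" where
  "noise_pts k Y e = Y - core_pts k Y e"

definition core_graph_rel :: "nat \<Rightarrow> ('a::metric_space) set \<Rightarrow> real \<Rightarrow> ('a \<times> 'a) set" where
  "core_graph_rel k Y e =
     {(p, q). p \<in> core_pts k Y e \<and> q \<in> core_pts k Y e \<and> p \<noteq> q \<and> dist p q \<le> e}"

definition Dstar :: "nat \<Rightarrow> ('a::metric_space) set \<Rightarrow> real \<Rightarrow> 'a set set" where
  "Dstar k Y e = {{q \<in> core_pts k Y e. (p, q) \<in> (core_graph_rel k Y e)\<^sup>*} | p. p \<in> core_pts k Y e}"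

text \<open>Conventions: the 0-th nearest neighbour of p is p itself (distance 0); if Z - {p}
  has fewer than k points, the core distance is infinite.\<close>
definition core_dist :: "nat \<Rightarrow> ('a::metric_space) set \<Rightarrow> 'a \<Rightarrow> ereal" where
  "core_dist k Z p =
     (if k = 0 then 0
      else if k \<le> card (Z - {p})
      then ereal (sorted_list_of_multiset (image_mset (dist p) (mset_set (Z - {p}))) ! (k - 1))
      else \<infinity>)"

definition rho :: "nat \<Rightarrow> ('a::metric_space) set \<Rightarrow> 'a \<Rightarrow> 'a \<Rightarrow> ereal" where
  "rho k Z p q = (if p = q then 0
                  else max (core_dist k Z p) (max (core_dist k Z q) (ereal (dist p q))))"

text \<open>A weighted graph is a vertex set together with a weight function;
  weight \<infinity> means ``no edge''.\<close>
type_synonym 'a wgraph = "'a set \<times> ('a \<Rightarrow> 'a \<Rightarrow> ereal)"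

definition complete_graph :: "'a set \<Rightarrow> ('a \<Rightarrow> 'a \<Rightarrow> ereal) \<Rightarrow> 'a wgraph" where
  "complete_graph Z w = (Z, \<lambda>p q. if p \<in> Z \<and> q \<in> Z \<and> p \<noteq> q then w p q else \<infinity>)"

definition trunc_graph :: "'a wgraph \<Rightarrow> real \<Rightarrow> 'a wgraph" where
  "trunc_graph G a = (fst G, \<lambda>p q. if snd G p q \<le> ereal a then snd G p q else \<infinity>)"

definition graph_union :: "'a wgraph \<Rightarrow> 'a wgraph \<Rightarrow> 'a wgraph" where
  "graph_union G H = (fst G \<union> fst H, \<lambda>p q. min (snd G p q) (snd H p q))"

definition graph_Union :: "'a wgraph set \<Rightarrow> 'a wgraph" where
  "graph_Union S = (\<Union> (fst ` S), \<lambda>p q. INF G\<in>S. snd G p q)"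

definition same_comp :: "'a wgraph \<Rightarrow> real \<Rightarrow> 'a \<Rightarrow> 'a \<Rightarrow> bool" where
  "same_comp G a p q \<longleftrightarrow> p \<in> fst G \<and> q \<in> fst G \<and>
     (p, q) \<in> {(x, y). x \<in> fst G \<and> y \<in> fst G \<and> x \<noteq> y \<and>
                      (snd G x y \<le> ereal a \<or> snd G y x \<le> ereal a)}\<^sup>*"

definition side_len :: "real \<Rightarrow> nat \<Rightarrow> real" where
  "side_len e n = e / (2 * sqrt (real n))"

definition cube :: "real \<Rightarrow> int ^ 'n \<Rightarrow> (real ^ 'n::finite) set" where
  "cube e j = {x. \<forall>i. of_int (j $ i) * side_len e CARD('n) \<le> x $ i \<and>
                      x $ i \<le> (of_int (j $ i) + 1) * side_len e CARD('n)}"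

definition Qcubes :: "real \<Rightarrow> (real ^ 'n::finite) set set" where
  "Qcubes e = range (cube e)"

definition thicken :: "real \<Rightarrow> nat \<Rightarrow> (real ^ 'n::finite) set \<Rightarrow> (real ^ 'n) set" where
  "thicken e m S = {x. \<exists>s\<in>S. \<forall>i. \<bar>x $ i - s $ i\<bar> \<le> real m * side_len e CARD('n)}"

definition Icubes :: "real \<Rightarrow> (real ^ 'n::finite) set \<Rightarrow> (real ^ 'n) set set" where
  "Icubes e B = {S \<in> Qcubes e. S \<inter> B \<noteq> {}}"

text \<open>Interior cube of A relative to the ambient (current) data set Y.\<close>
definition interior_cube :: "real \<Rightarrow> (real ^ 'n::finite) set \<Rightarrow> (real ^ 'n) set \<Rightarrow> (real ^ 'n) set \<Rightarrow> bool" where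
  "interior_cube e Y A S \<longleftrightarrow> S \<in> Icubes e A \<and> thicken e 1 S \<inter> Y \<subseteq> A \<and>
     (\<forall>T \<in> Qcubes e. T \<subseteq> thicken e 1 S \<longrightarrow> T \<in> Icubes e A)"

definition bdry :: "real \<Rightarrow> (real ^ 'n::finite) set \<Rightarrow> (real ^ 'n) set \<Rightarrow> (real ^ 'n) set" where
  "bdry e Y A = \<Union> {S \<in> Icubes e A. \<not> interior_cube e Y A S}"

definition nbhd :: "real \<Rightarrow> nat \<Rightarrow> (real ^ 'n::finite) set \<Rightarrow> (real ^ 'n) set" where
  "nbhd e N Z = (\<Union>S \<in> Icubes e Z. thicken e N S)"

definition frakN :: "nat \<Rightarrow> nat" where
  "frakN n = nat \<lceil>sqrt (real n) - 1\<rceil> + nat \<lceil>2 * sqrt (real n)\<rceil>"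

definition Ffilter :: "nat \<Rightarrow> (real ^ 'n::finite) set \<Rightarrow> real \<Rightarrow> (real ^ 'n) set" where
  "Ffilter k Y e = (\<Union>C \<in> Dstar k Y e. nbhd e (frakN CARD('n)) (bdry e Y C) \<inter> C) \<union> noise_pts k Y e"

text \<open>Xs k eps X m is X_(m+1): X_1 = X, X_(i+1) = F(X_i, eps_i).\<close>
fun Xs :: "nat \<Rightarrow> (nat \<Rightarrow> real) \<Rightarrow> (real ^ 'n::finite) set \<Rightarrow> nat \<Rightarrow> (real ^ 'n) set" where
  "Xs k eps X 0 = X"
| "Xs k eps X (Suc m) = Ffilter k (Xs k eps X m) (eps (Suc m))"

definition Bset :: "('a::metric_space) set \<Rightarrow> real \<Rightarrow> 'a set \<Rightarrow> 'a set" where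
  "Bset Y e C = {y \<in> Y. infdist y C \<le> e}"

fun Hgraph :: "nat \<Rightarrow> (nat \<Rightarrow> real) \<Rightarrow> (real ^ 'n::finite) set \<Rightarrow> nat \<Rightarrow> (real ^ 'n) wgraph" where
  "Hgraph k eps X 0 = (X, \<lambda>p q. \<infinity>)"
| "Hgraph k eps X (Suc i) =
     graph_union
       (graph_Union
          {trunc_graph
             (complete_graph (Bset (Xs k eps X i) (eps (Suc i)) C)
                             (rho k (Bset (Xs k eps X i) (eps (Suc i)) C)))
             (eps (Suc i)) | C. C \<in> Dstar k (Xs k eps X i) (eps (Suc i))})
       (Hgraph k eps X i)"

definition Fgraph :: "nat \<Rightarrow> (nat \<Rightarrow> real) \<Rightarrow> (real ^ 'n::finite) set \<Rightarrow> nat \<Rightarrow> (real ^ 'n) wgraph" where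
  "Fgraph k eps X i = graph_union (complete_graph (Xs k eps X i) (rho k (Xs k eps X i))) (Hgraph k eps X i)"

end

theory Submission
  imports Defs
begin

(* Removing points only increases core distances, so every edge of H(i) and F(i) is at least as
   heavy as in G(X, rho^X); hence their components at any level lie inside those of G(X, rho^X).
   Conversely, by induction on i, the ends of every edge of G(X, rho^X)_a are joined in F(i)_a.
   In the step from F(i) to F(i+1) the edges to account for are those of G(X_(i+1), rho^(X_(i+1)))_a,
   since H(i) is part of H(i+1).  If a <= eps_(i+1), such an edge joins two core points of one
   DBSCAN* cluster of X_(i+1) at scale eps_(i+1) and reappears in the mutual reachability graph of
   the eps_(i+1)-neighbourhood of that cluster, which is part of H(i+1).  If a >= eps_(i+1), each
   cluster is connected in H(i+1) at level eps_(i+1), and the difficulty is to pass between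
   clusters and noise points when the filter has removed points in between.  Here the cube
   geometry enters: the segment from a point z outside a cluster C to a point of C crosses a
   boundary cube of C, and a point b of C in that cube is no farther from z and keeps its whole
   eps_(i+1)-ball, because the filter keeps a frakN-thickening of the boundary cubes.  Such points
   b are still core points of X_(i+2) at scale a and serve as stepping stones. *)

section \<open>Core distances via neighbour counts\<close>

definition nbr_count :: "('a::metric_space) set \<Rightarrow> 'a \<Rightarrow> real \<Rightarrow> nat" where
  "nbr_count Z x a = card {z \<in> Z - {x}. dist x z \<le> a}"

lemma nbr_count_mono_set: "finite W \<Longrightarrow> Z \<subseteq> W \<Longrightarrow> nbr_count Z x a \<le> nbr_count W x a"
  unfolding nbr_count_def by (intro card_mono) auto

lemma sorted_nth_le_iff:
  fixes L :: "'a::linorder list"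
  assumes "sorted L" "1 \<le> k" "k \<le> length L"
  shows "L ! (k - 1) \<le> a \<longleftrightarrow> k \<le> length (filter (\<lambda>v. v \<le> a) L)"
proof -
  let ?I = "{i. i < length L \<and> L ! i \<le> a}"
  have len: "length (filter (\<lambda>v. v \<le> a) L) = card ?I"
    by (simp add: length_filter_conv_card)
  show ?thesis
  proof
    assume le: "L ! (k - 1) \<le> a"
    have "{0..<k} \<subseteq> ?I"
    proof
      fix i assume "i \<in> {0..<k}"
      then have i: "i \<le> k - 1" "k - 1 < length L" using assms by auto
      then have "L ! i \<le> L ! (k - 1)" by (rule sorted_nth_mono[OF assms(1)])
      then have "L ! i \<le> a" using le by (rule order_trans)
      then show "i \<in> ?I" using i by simp
    qed
    then show "k \<le> length (filter (\<lambda>v. v \<le> a) L)"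
      using card_mono[of ?I "{0..<k}"] len by simp
  next
    assume k_le: "k \<le> length (filter (\<lambda>v. v \<le> a) L)"
    show "L ! (k - 1) \<le> a"
    proof (rule ccontr)
      assume gt: "\<not> L ! (k - 1) \<le> a"
      have "?I \<subseteq> {0..<k - 1}"
      proof
        fix i assume i: "i \<in> ?I"
        show "i \<in> {0..<k - 1}"
        proof (rule ccontr)
          assume "i \<notin> {0..<k - 1}"
          then have "L ! (k - 1) \<le> L ! i" using i by (intro sorted_nth_mono[OF assms(1)]) auto
          then have "L ! (k - 1) \<le> a" using i by (simp add: order_trans[of _ "L ! i"])
          then show False using gt by contradiction
        qed
      qed
      then have "card ?I \<le> k - 1" using card_mono[of "{0..<k - 1}" ?I] by simp
      then show False using k_le len assms(2) by simp
    qed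
  qed
qed

lemma length_filter_sorted_dists:
  assumes "finite Z"
  shows "length (filter (\<lambda>v. v \<le> a)
            (sorted_list_of_multiset (image_mset (dist x) (mset_set (Z - {x})))))
         = nbr_count Z x a"
proof -
  let ?M = "image_mset (dist x) (mset_set (Z - {x}))"
  have "length (filter (\<lambda>v. v \<le> a) (sorted_list_of_multiset ?M))
          = size (filter_mset (\<lambda>v. v \<le> a) ?M)"
    by (metis mset_filter mset_sorted_list_of_multiset size_mset)
  also have "\<dots> = size (mset_set {z \<in> Z - {x}. dist x z \<le> a})"
    using assms by (simp add: filter_mset_image_mset filter_mset_mset_set)
  finally show ?thesis using assms by (simp add: nbr_count_def)
qed

lemma core_dist_le_iff:
  assumes "finite Z" "0 \<le> a"
  shows "core_dist k Z x \<le> ereal a \<longleftrightarrow> k \<le> nbr_count Z x a"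
proof -
  let ?L = "sorted_list_of_multiset (image_mset (dist x) (mset_set (Z - {x})))"
  have len: "length ?L = card (Z - {x})"
    by (metis mset_sorted_list_of_multiset size_mset size_image_mset size_mset_set)
  have "nbr_count Z x a \<le> card (Z - {x})"
    unfolding nbr_count_def using assms by (intro card_mono) auto
  moreover have "?L ! (k - 1) \<le> a \<longleftrightarrow> k \<le> nbr_count Z x a"
    if "k \<noteq> 0" "k \<le> card (Z - {x})"
    using sorted_nth_le_iff[of ?L k a] that len length_filter_sorted_dists[OF assms(1)] by simp
  ultimately show ?thesis using assms(2) by (auto simp: core_dist_def)
qed

lemma core_dist_nonneg: "0 \<le> core_dist k Z x"
proof -
  let ?L = "sorted_list_of_multiset (image_mset (dist x) (mset_set (Z - {x})))"
  have len: "length ?L = card (Z - {x})"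
    by (metis mset_sorted_list_of_multiset size_mset size_image_mset size_mset_set)
  have "0 \<le> ?L ! (k - 1)" if "k \<noteq> 0" "k \<le> card (Z - {x})"
  proof -
    have "?L ! (k - 1) \<in> set ?L" using that len by (intro nth_mem) linarith
    then have "?L ! (k - 1) \<in># image_mset (dist x) (mset_set (Z - {x}))"
      by (simp only: set_sorted_list_of_multiset)
    then show ?thesis by auto
  qed
  then show ?thesis by (simp add: core_dist_def)
qed

lemma core_dist_antimono:
  assumes "finite W" "Z \<subseteq> W"
  shows "core_dist k W x \<le> core_dist k Z x"
proof (cases "core_dist k Z x")
  case (real c)
  have "0 \<le> c" using core_dist_nonneg[of k Z x] real by simp
  moreover have "finite Z" using assms(2,1) by (rule finite_subset)
  ultimately show ?thesis
    using real core_dist_le_iff[of Z c k x] core_dist_le_iff[OF assms(1), of c k x]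
      nbr_count_mono_set[OF assms, of x c] by simp
qed (use core_dist_nonneg[of k Z x] in simp_all)

lemma rho_antimono:
  assumes "finite W" "Z \<subseteq> W"
  shows "rho k W x y \<le> rho k Z x y"
  using core_dist_antimono[OF assms, of k x] core_dist_antimono[OF assms, of k y]
  by (auto simp: rho_def le_max_iff_disj)

lemma rho_le_iff:
  assumes "finite Z" "u \<noteq> v"
  shows "rho k Z u v \<le> ereal a \<longleftrightarrow>
           k \<le> nbr_count Z u a \<and> k \<le> nbr_count Z v a \<and> dist u v \<le> a"
proof -
  have "0 \<le> a" if "dist u v \<le> a" using that zero_le_dist order_trans by blast
  then show ?thesis using assms core_dist_le_iff[OF assms(1)] by (auto simp: rho_def)
qed

lemma core_pts_iff:
  assumes "finite Y" "0 \<le> e"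
  shows "p \<in> core_pts k Y e \<longleftrightarrow> p \<in> Y \<and> k \<le> nbr_count Y p e"
proof (cases "p \<in> Y")
  case True
  have "{y \<in> Y. dist p y \<le> e} = insert p {z \<in> Y - {p}. dist p z \<le> e}"
    using True assms by auto
  then have "card {y \<in> Y. dist p y \<le> e} = Suc (nbr_count Y p e)"
    using assms by (simp add: nbr_count_def)
  then show ?thesis using True by (auto simp: core_pts_def)
qed (simp add: core_pts_def)

lemma core_pts_mono_radius:
  assumes "finite Y" "e \<le> a"
  shows "core_pts k Y e \<subseteq> core_pts k Y a"
proof
  fix p assume "p \<in> core_pts k Y e"
  moreover have "card {y \<in> Y. dist p y \<le> e} \<le> card {y \<in> Y. dist p y \<le> a}"
    using assms by (intro card_mono) auto
  ultimately show "p \<in> core_pts k Y a" by (simp add: core_pts_def)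
qed

lemma rho_le_iff_core_pts:
  assumes "finite Y" "u \<in> Y" "v \<in> Y" "u \<noteq> v"
  shows "rho k Y u v \<le> ereal a \<longleftrightarrow>
           u \<in> core_pts k Y a \<and> v \<in> core_pts k Y a \<and> dist u v \<le> a"
proof -
  have "0 \<le> a" if "dist u v \<le> a" using that zero_le_dist order_trans by blast
  then show ?thesis
    using assms rho_le_iff[OF assms(1,4)] core_pts_iff[OF assms(1)] by blast
qed

section \<open>DBSCAN* clusters\<close>

abbreviation cluster_of :: "nat \<Rightarrow> ('a::metric_space) set \<Rightarrow> real \<Rightarrow> 'a \<Rightarrow> 'a set" where
  "cluster_of k Y e p \<equiv> {q \<in> core_pts k Y e. (p, q) \<in> (core_graph_rel k Y e)\<^sup>*}"

lemma core_graph_rel_rtrancl_sym: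
  assumes "(p, q) \<in> (core_graph_rel k Y e)\<^sup>*"
  shows "(q, p) \<in> (core_graph_rel k Y e)\<^sup>*"
proof -
  have "sym (core_graph_rel k Y e)"
    unfolding core_graph_rel_def sym_def by (auto simp: dist_commute)
  then show ?thesis using assms by (metis sym_rtrancl symD)
qed

lemma DstarE:
  assumes "C \<in> Dstar k Y e"
  obtains p where "p \<in> core_pts k Y e" "C = cluster_of k Y e p"
  using assms unfolding Dstar_def by auto

lemma cluster_of_in_Dstar: "p \<in> core_pts k Y e \<Longrightarrow> cluster_of k Y e p \<in> Dstar k Y e"
  unfolding Dstar_def by auto

lemma Dstar_subset_core_pts: "C \<in> Dstar k Y e \<Longrightarrow> C \<subseteq> core_pts k Y e"
  by (auto elim: DstarE)

lemma Dstar_subset: "C \<in> Dstar k Y e \<Longrightarrow> C \<subseteq> Y"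
  using Dstar_subset_core_pts by (fastforce simp: core_pts_def)

lemma Dstar_connected:
  assumes "C \<in> Dstar k Y e" "x \<in> C" "y \<in> C"
  shows "(x, y) \<in> (core_graph_rel k Y e)\<^sup>*"
proof -
  obtain p where "C = cluster_of k Y e p" using assms(1) by (auto elim: DstarE)
  then have "(x, p) \<in> (core_graph_rel k Y e)\<^sup>*" "(p, y) \<in> (core_graph_rel k Y e)\<^sup>*"
    using assms core_graph_rel_rtrancl_sym by auto
  then show ?thesis by (rule rtrancl_trans)
qed

lemma Dstar_closed_rtrancl:
  assumes "C \<in> Dstar k Y e" "x \<in> C" "(x, y) \<in> (core_graph_rel k Y e)\<^sup>*"
  shows "y \<in> C"
proof -
  obtain p where C: "C = cluster_of k Y e p" using assms(1) by (auto elim: DstarE)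
  have "y = x \<or> y \<in> core_pts k Y e"
    using assms(3) by (cases rule: rtranclE) (auto simp: core_graph_rel_def)
  then show ?thesis using assms C by (auto intro: rtrancl_trans)
qed

lemma Dstar_closed:
  assumes "C \<in> Dstar k Y e" "x \<in> C" "y \<in> core_pts k Y e" "dist x y \<le> e"
  shows "y \<in> C"
proof (cases "x = y")
  case False
  then have "(x, y) \<in> core_graph_rel k Y e"
    using assms Dstar_subset_core_pts[OF assms(1)] by (auto simp: core_graph_rel_def)
  then show ?thesis using Dstar_closed_rtrancl[OF assms(1,2)] by blast
qed (use assms in simp)

lemma Dstar_eq:
  assumes "C \<in> Dstar k Y e" "C' \<in> Dstar k Y e" "x \<in> C" "x \<in> C'"
  shows "C = C'"
  using Dstar_connected[OF assms(1,3)] Dstar_connected[OF assms(2,4)]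
    Dstar_closed_rtrancl[OF assms(1,3)] Dstar_closed_rtrancl[OF assms(2,4)] by blast

section \<open>Connected components of weighted graphs\<close>

lemma fst_complete_graph [simp]: "fst (complete_graph Z w) = Z"
  by (simp add: complete_graph_def)

lemma snd_complete_graph:
  "snd (complete_graph Z w) x y = (if x \<in> Z \<and> y \<in> Z \<and> x \<noteq> y then w x y else \<infinity>)"
  by (simp add: complete_graph_def)

lemma fst_trunc_graph [simp]: "fst (trunc_graph G a) = fst G"
  by (simp add: trunc_graph_def)

lemma snd_trunc_graph:
  "snd (trunc_graph G a) x y = (if snd G x y \<le> ereal a then snd G x y else \<infinity>)"
  by (simp add: trunc_graph_def)

lemma fst_graph_union [simp]: "fst (graph_union G H) = fst G \<union> fst H"
  by (simp add: graph_union_def)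

lemma snd_graph_union [simp]: "snd (graph_union G H) x y = min (snd G x y) (snd H x y)"
  by (simp add: graph_union_def)

lemma fst_graph_Union [simp]: "fst (graph_Union S) = \<Union> (fst ` S)"
  by (simp add: graph_Union_def)

lemma snd_graph_Union [simp]: "snd (graph_Union S) x y = (INF G\<in>S. snd G x y)"
  by (simp add: graph_Union_def)

definition edge_rel :: "'a wgraph \<Rightarrow> real \<Rightarrow> ('a \<times> 'a) set" where
  "edge_rel G a = {(x, y). x \<in> fst G \<and> y \<in> fst G \<and> x \<noteq> y \<and>
                          (snd G x y \<le> ereal a \<or> snd G y x \<le> ereal a)}"

lemma same_comp_iff: "same_comp G a p q \<longleftrightarrow> p \<in> fst G \<and> q \<in> fst G \<and> (p, q) \<in> (edge_rel G a)\<^sup>*"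
  unfolding same_comp_def edge_rel_def by simp

lemma same_comp_refl: "p \<in> fst G \<Longrightarrow> same_comp G a p p"
  by (simp add: same_comp_iff)

lemma same_comp_trans: "same_comp G a p q \<Longrightarrow> same_comp G a q r \<Longrightarrow> same_comp G a p r"
  by (auto simp: same_comp_iff)

lemma same_comp_sym:
  assumes "same_comp G a p q"
  shows "same_comp G a q p"
proof -
  have "sym (edge_rel G a)" by (auto simp: edge_rel_def sym_def)
  then have "sym ((edge_rel G a)\<^sup>*)" by (rule sym_rtrancl)
  then show ?thesis using assms by (auto simp: same_comp_iff sym_def)
qed

lemma same_comp_edge:
  "x \<in> fst G \<Longrightarrow> y \<in> fst G \<Longrightarrow> x \<noteq> y \<Longrightarrow> snd G x y \<le> ereal a \<Longrightarrow> same_comp G a x y"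
  by (auto simp: same_comp_iff edge_rel_def)

lemma same_comp_by_edges:
  assumes "fst G \<subseteq> fst G'"
    and edge: "\<And>x y. x \<in> fst G \<Longrightarrow> y \<in> fst G \<Longrightarrow> x \<noteq> y \<Longrightarrow> snd G x y \<le> ereal a \<Longrightarrow>
                 same_comp G' b x y"
    and "same_comp G a p q"
  shows "same_comp G' b p q"
proof -
  have "p \<in> fst G" and "(p, q) \<in> (edge_rel G a)\<^sup>*" using assms(3) by (auto simp: same_comp_iff)
  from this(2) show ?thesis
  proof (induction rule: rtrancl_induct)
    case base
    then show ?case using \<open>p \<in> fst G\<close> assms(1) by (auto intro: same_comp_refl)
  next
    case (step y z)
    then have yz: "y \<in> fst G" "z \<in> fst G" "y \<noteq> z" "snd G y z \<le> ereal a \<or> snd G z y \<le> ereal a"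
      by (auto simp: edge_rel_def)
    then have "same_comp G' b y z"
      using edge[of y z] edge[of z y] same_comp_sym[of G' b z y] by auto
    with step.IH show ?case by (rule same_comp_trans)
  qed
qed

lemma same_comp_subgraph:
  assumes "fst G \<subseteq> fst G'" "\<And>x y. snd G' x y \<le> snd G x y" "a \<le> b"
    and "same_comp G a p q"
  shows "same_comp G' b p q"
proof (rule same_comp_by_edges[OF assms(1) _ assms(4)])
  fix x y assume "x \<in> fst G" "y \<in> fst G" "x \<noteq> y" "snd G x y \<le> ereal a"
  moreover have "snd G' x y \<le> ereal b"
    using assms(2)[of x y] \<open>snd G x y \<le> ereal a\<close> assms(3) by (meson ereal_less_eq(3) order_trans)
  ultimately show "same_comp G' b x y" using assms(1) by (auto intro: same_comp_edge)
qed

section \<open>The construction: vertex sets and soundness\<close>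

lemma Ffilter_subset: "Ffilter k Y e \<subseteq> Y"
  unfolding Ffilter_def noise_pts_def using Dstar_subset by fast

lemma noise_in_Ffilter: "y \<in> Y \<Longrightarrow> y \<notin> core_pts k Y e \<Longrightarrow> y \<in> Ffilter k Y e"
  by (simp add: Ffilter_def noise_pts_def)

lemma Xs_subset: "Xs k eps X m \<subseteq> X"
  by (induction m) (simp_all add: order_trans[OF Ffilter_subset])

lemma finite_Xs: "finite X \<Longrightarrow> finite (Xs k eps X m)"
  by (rule finite_subset[OF Xs_subset])

lemma Bset_subset: "Bset Y e C \<subseteq> Y"
  by (auto simp: Bset_def)

definition cluster_graph :: "nat \<Rightarrow> ('a::metric_space) set \<Rightarrow> real \<Rightarrow> 'a set \<Rightarrow> 'a wgraph" where
  "cluster_graph k Y e C = trunc_graph (complete_graph (Bset Y e C) (rho k (Bset Y e C))) e"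

lemma Hgraph_Suc:
  "Hgraph k eps X (Suc i) =
     graph_union
       (graph_Union (cluster_graph k (Xs k eps X i) (eps (Suc i)) ` Dstar k (Xs k eps X i) (eps (Suc i))))
       (Hgraph k eps X i)"
  by (simp add: cluster_graph_def Setcompr_eq_image)

declare Hgraph.simps(2) [simp del]

lemma fst_cluster_graph [simp]: "fst (cluster_graph k Y e C) = Bset Y e C"
  by (simp add: cluster_graph_def)

lemma fst_Hgraph [simp]: "fst (Hgraph k eps X m) = X"
proof (induction m)
  case (Suc m)
  have "x \<in> X" if "x \<in> Bset (Xs k eps X m) e C" for x e C
    using that Bset_subset Xs_subset by blast
  then show ?case using Suc by (auto simp: Hgraph_Suc)
qed simp

lemma fst_Fgraph [simp]: "fst (Fgraph k eps X m) = X"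
  by (auto simp: Fgraph_def dest: subsetD[OF Xs_subset])

lemma rho_le_snd_cluster_graph:
  assumes "finite X" "Y \<subseteq> X"
  shows "rho k X x y \<le> snd (cluster_graph k Y e C) x y"
proof -
  have "Bset Y e C \<subseteq> X" using Bset_subset assms(2) by (rule order_trans)
  then show ?thesis
    using rho_antimono[OF assms(1)] by (auto simp: cluster_graph_def snd_trunc_graph snd_complete_graph)
qed

lemma rho_le_snd_Hgraph: "finite X \<Longrightarrow> rho k X x y \<le> snd (Hgraph k eps X m) x y"
proof (induction m)
  case (Suc m)
  then show ?case
    using rho_le_snd_cluster_graph[OF Suc.prems Xs_subset] by (simp add: Hgraph_Suc le_INF_iff)
qed simp

lemma rho_le_snd_Fgraph:
  assumes "finite X"
  shows "rho k X x y \<le> snd (Fgraph k eps X m) x y"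
  using rho_le_snd_Hgraph[OF assms] rho_antimono[OF assms Xs_subset, of k x y k eps m]
  by (simp add: Fgraph_def snd_complete_graph)

lemma same_comp_complete_graph_of_le:
  assumes "fst G = Z" "\<And>x y. w x y \<le> snd G x y" "same_comp G a p q"
  shows "same_comp (complete_graph Z w) a p q"
proof (rule same_comp_by_edges[OF _ _ assms(3)])
  fix x y assume "x \<in> fst G" "y \<in> fst G" "x \<noteq> y" "snd G x y \<le> ereal a"
  then show "same_comp (complete_graph Z w) a x y"
    using assms(1) assms(2)[of x y] by (intro same_comp_edge) (auto simp: snd_complete_graph)
qed (use assms(1) in simp)

section \<open>Cube geometry\<close>

lemma side_len_pos: "0 < e \<Longrightarrow> 0 < side_len e CARD('n::finite)"
  by (simp add: side_len_def)

lemma scale_eq_side_len: "e = 2 * sqrt (real CARD('n::finite)) * side_len e CARD('n)"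
  by (simp add: side_len_def)

lemma frakN_lower_bounds:
  "2 * sqrt (real n) \<le> real (frakN n)" "3 * sqrt (real n) \<le> real (frakN n) + 1"
  using real_nat_ceiling_ge[of "sqrt (real n) - 1"] real_nat_ceiling_ge[of "2 * sqrt (real n)"]
    of_nat_0_le_iff[of "nat \<lceil>sqrt (real n) - 1\<rceil>"]
  unfolding frakN_def of_nat_add by linarith+

lemma scale_le_frakN_side_len:
  assumes "0 < e"
  shows "e \<le> real (frakN CARD('n)) * side_len e CARD('n::finite)"
proof -
  have "e = 2 * sqrt (real CARD('n)) * side_len e CARD('n)" by (rule scale_eq_side_len)
  also have "\<dots> \<le> real (frakN CARD('n)) * side_len e CARD('n)"
    using frakN_lower_bounds(1) side_len_pos[OF assms, where 'n='n] by (intro mult_right_mono) auto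
  finally show ?thesis .
qed

lemma scale_plus_diam_le_frakN_side_len:
  assumes "0 < e"
  shows "e + sqrt (real CARD('n)) * side_len e CARD('n) \<le>
           (real (frakN CARD('n)) + 1) * side_len e CARD('n::finite)"
proof -
  have "e + sqrt (real CARD('n)) * side_len e CARD('n) = 3 * sqrt (real CARD('n)) * side_len e CARD('n)"
    using scale_eq_side_len[of e, where 'n='n] by linarith
  also have "\<dots> \<le> (real (frakN CARD('n)) + 1) * side_len e CARD('n)"
    using frakN_lower_bounds(2) side_len_pos[OF assms, where 'n='n] by (intro mult_right_mono) auto
  finally show ?thesis .
qed

lemma mem_cube:
  "x \<in> cube e j \<longleftrightarrow> (\<forall>i. of_int (j $ i) * side_len e CARD('n) \<le> x $ i \<and>
                         x $ i \<le> (of_int (j $ i) + 1) * side_len e CARD('n))"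
  for x :: "real ^ 'n::finite"
  by (simp add: cube_def)

lemma cube_in_Qcubes: "cube e j \<in> Qcubes e"
  by (simp add: Qcubes_def)

lemma QcubesE:
  assumes "S \<in> Qcubes e"
  obtains j where "S = cube e j"
  using assms by (auto simp: Qcubes_def)

lemma mem_cube_floor:
  fixes x :: "real ^ 'n::finite"
  assumes "0 < e"
  shows "x \<in> cube e (\<chi> i. \<lfloor>x $ i / side_len e CARD('n)\<rfloor>)"
proof -
  let ?s = "side_len e CARD('n)"
  have s: "0 < ?s" by (rule side_len_pos[OF assms])
  have "of_int \<lfloor>x $ i / ?s\<rfloor> * ?s \<le> x $ i \<and> x $ i \<le> (of_int \<lfloor>x $ i / ?s\<rfloor> + 1) * ?s" for i
    using floor_divide_lower[OF s, of "x $ i"] floor_divide_upper[OF s, of "x $ i"] by simp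
  then show ?thesis by (simp add: mem_cube)
qed

lemma closed_cube: "closed (cube e j :: (real ^ 'n::finite) set)"
proof -
  have "cube e j = (\<Inter>i. (\<lambda>x. x $ i) -` {of_int (j $ i) * side_len e CARD('n) ..
                                          (of_int (j $ i) + 1) * side_len e CARD('n)})"
    by (auto simp: cube_def)
  then show ?thesis by (simp add: closed_INT closed_vimage_vec_nth)
qed

lemma mem_thicken_cube:
  fixes x :: "real ^ 'n::finite"
  assumes "0 < e"
  shows "x \<in> thicken e N (cube e j) \<longleftrightarrow>
    (\<forall>i. (of_int (j $ i) - real N) * side_len e CARD('n) \<le> x $ i \<and>
         x $ i \<le> (of_int (j $ i) + 1 + real N) * side_len e CARD('n))"
proof -
  let ?s = "side_len e CARD('n)"
  have s: "0 < ?s" by (rule side_len_pos[OF assms])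
  show ?thesis
  proof
    assume "x \<in> thicken e N (cube e j)"
    then obtain v where v: "v \<in> cube e j" "\<And>i. \<bar>x $ i - v $ i\<bar> \<le> real N * ?s"
      by (auto simp: thicken_def)
    show "\<forall>i. (of_int (j $ i) - real N) * ?s \<le> x $ i \<and> x $ i \<le> (of_int (j $ i) + 1 + real N) * ?s"
    proof
      fix i
      have "of_int (j $ i) * ?s \<le> v $ i" "v $ i \<le> (of_int (j $ i) + 1) * ?s"
        using v(1) by (auto simp: mem_cube)
      then show "(of_int (j $ i) - real N) * ?s \<le> x $ i \<and> x $ i \<le> (of_int (j $ i) + 1 + real N) * ?s"
        using v(2)[of i] by (auto simp: algebra_simps abs_le_iff)
    qed
  next
    assume h: "\<forall>i. (of_int (j $ i) - real N) * ?s \<le> x $ i \<and> x $ i \<le> (of_int (j $ i) + 1 + real N) * ?s"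
    define v where "v = (\<chi> i. max (of_int (j $ i) * ?s) (min ((of_int (j $ i) + 1) * ?s) (x $ i)))"
    have "v \<in> cube e j" unfolding mem_cube v_def using s by (auto simp: algebra_simps)
    moreover have "\<bar>x $ i - v $ i\<bar> \<le> real N * ?s" for i
      using h[rule_format, of i] s unfolding v_def by (auto simp: algebra_simps abs_le_iff max_def min_def)
    ultimately show "x \<in> thicken e N (cube e j)" unfolding thicken_def by auto
  qed
qed

lemma subset_thicken: "0 \<le> e \<Longrightarrow> S \<subseteq> thicken e N S"
  by (force simp: thicken_def side_len_def)

lemma dist_le_in_cube:
  fixes x y :: "real ^ 'n::finite"
  assumes "x \<in> cube e j" "y \<in> cube e j" "0 < e"
  shows "dist x y \<le> sqrt (real CARD('n)) * side_len e CARD('n)"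
proof -
  let ?s = "side_len e CARD('n)"
  have s: "0 < ?s" by (rule side_len_pos[OF assms(3)])
  have "dist (x $ i) (y $ i) \<le> ?s" for i
    using assms(1,2) unfolding mem_cube dist_real_def
    by (auto simp: abs_le_iff algebra_simps) (smt (verit))+
  then have "(\<Sum>i\<in>UNIV. (dist (x $ i) (y $ i))\<^sup>2) \<le> (\<Sum>i\<in>(UNIV::'n set). ?s\<^sup>2)"
    by (intro sum_mono power_mono) auto
  then have "dist x y \<le> sqrt (\<Sum>i\<in>(UNIV::'n set). ?s\<^sup>2)"
    unfolding dist_vec_def L2_set_def by (rule real_sqrt_le_mono)
  also have "\<dots> = sqrt (real CARD('n)) * ?s" using s by (simp add: real_sqrt_mult)
  finally show ?thesis .
qed

lemma finite_vec_componentwise: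
  fixes F :: "'n::finite \<Rightarrow> 'a set"
  assumes "\<And>i. finite (F i)"
  shows "finite {j :: 'a ^ 'n. \<forall>i. j $ i \<in> F i}"
proof -
  have "vec_nth ` {j :: 'a ^ 'n. \<forall>i. j $ i \<in> F i} \<subseteq> PiE UNIV F"
    by (auto simp: PiE_def extensional_def)
  moreover have "finite (PiE UNIV F)" using assms by (intro finite_PiE) auto
  ultimately have "finite (vec_nth ` {j :: 'a ^ 'n. \<forall>i. j $ i \<in> F i})"
    by (rule finite_subset)
  moreover have "inj_on vec_nth {j :: 'a ^ 'n. \<forall>i. j $ i \<in> F i}"
    by (intro inj_onI) (simp add: vec_eq_iff)
  ultimately show ?thesis using finite_imageD by blast
qed

lemma finite_cubes_containing:
  fixes x :: "real ^ 'n::finite"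
  assumes "0 < e"
  shows "finite {S \<in> Qcubes e. x \<in> S}"
proof -
  let ?s = "side_len e CARD('n)"
  have s: "0 < ?s" by (rule side_len_pos[OF assms])
  let ?J = "{j :: int ^ 'n. \<forall>i. j $ i \<in> {\<lfloor>x $ i / ?s\<rfloor> - 1, \<lfloor>x $ i / ?s\<rfloor>}}"
  have "j \<in> ?J" if "x \<in> cube e j" for j
  proof -
    have "j $ i = \<lfloor>x $ i / ?s\<rfloor> - 1 \<or> j $ i = \<lfloor>x $ i / ?s\<rfloor>" for i
    proof -
      have "of_int (j $ i) \<le> x $ i / ?s" "x $ i / ?s \<le> of_int (j $ i) + 1"
        using that s by (auto simp: mem_cube pos_le_divide_eq pos_divide_le_eq)
      then have "j $ i \<le> \<lfloor>x $ i / ?s\<rfloor>" "\<lfloor>x $ i / ?s\<rfloor> \<le> j $ i + 1"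
        by (simp_all add: le_floor_iff floor_le_iff)
      then show ?thesis by linarith
    qed
    then show ?thesis by simp
  qed
  then have "{S \<in> Qcubes e. x \<in> S} \<subseteq> cube e ` ?J"
    by (auto simp: Qcubes_def)
  moreover have "finite (cube e ` ?J)"
    by (intro finite_imageI finite_vec_componentwise) auto
  ultimately show ?thesis by (rule finite_subset)
qed

lemma finite_Icubes:
  fixes C :: "(real ^ 'n::finite) set"
  assumes "finite C" "0 < e"
  shows "finite (Icubes e C)"
proof -
  have "Icubes e C \<subseteq> (\<Union>x\<in>C. {S \<in> Qcubes e. x \<in> S})" by (auto simp: Icubes_def)
  moreover have "finite (\<Union>x\<in>C. {S \<in> Qcubes e. x \<in> S})"
    by (intro finite_UN_I assms(1) finite_cubes_containing[OF assms(2)])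
  ultimately show ?thesis by (rule finite_subset)
qed

lemma closed_Union_Icubes:
  fixes C :: "(real ^ 'n::finite) set"
  assumes "finite C" "0 < e"
  shows "closed (\<Union> (Icubes e C))"
  using finite_Icubes[OF assms] closed_cube by (auto simp: Icubes_def elim!: QcubesE intro!: closed_Union)

lemma cube_subset_thicken_cube:
  assumes "0 < e" "\<And>i. \<bar>j $ i - m $ i\<bar> \<le> 1"
  shows "cube e j \<subseteq> thicken e 1 (cube e m :: (real ^ 'n::finite) set)"
proof
  fix z :: "real ^ 'n" assume z: "z \<in> cube e j"
  let ?s = "side_len e CARD('n)"
  have s: "0 < ?s" by (rule side_len_pos[OF assms(1)])
  show "z \<in> thicken e 1 (cube e m)"
    unfolding mem_thicken_cube[OF assms(1)]
  proof
    fix i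
    have "of_int (m $ i - 1) \<le> real_of_int (j $ i)" "real_of_int (j $ i) \<le> of_int (m $ i + 1)"
      using assms(2)[of i] by (simp_all add: abs_le_iff)
    then have "(of_int (m $ i) - 1) * ?s \<le> of_int (j $ i) * ?s"
      "(of_int (j $ i) + 1) * ?s \<le> (of_int (m $ i) + 1 + 1) * ?s"
      using s by (simp_all add: mult_right_mono)
    moreover have "of_int (j $ i) * ?s \<le> z $ i" "z $ i \<le> (of_int (j $ i) + 1) * ?s"
      using z by (simp_all add: mem_cube)
    ultimately show "(of_int (m $ i) - real 1) * ?s \<le> z $ i \<and> z $ i \<le> (of_int (m $ i) + 1 + real 1) * ?s"
      unfolding of_nat_1 by linarith
  qed
qed

lemma near_interior_cube_in_Icubes:
  fixes x w :: "real ^ 'n::finite"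
  assumes "0 < e" "interior_cube e Y C W" "x \<in> W" "dist x w < side_len e CARD('n)"
  shows "w \<in> \<Union> (Icubes e C)"
proof -
  let ?s = "side_len e CARD('n)"
  have s: "0 < ?s" by (rule side_len_pos[OF assms(1)])
  have "W \<in> Qcubes e" using assms(2) by (simp add: interior_cube_def Icubes_def)
  then obtain m where W: "W = cube e m" by (rule QcubesE)
  define j where "j = (\<chi> i. \<lfloor>w $ i / ?s\<rfloor>)"
  have "\<bar>j $ i - m $ i\<bar> \<le> 1" for i
  proof -
    have "\<bar>w $ i - x $ i\<bar> < ?s"
      using dist_vec_nth_le[of w i x] assms(4) by (simp add: dist_real_def dist_commute)
    moreover have "of_int (m $ i) * ?s \<le> x $ i" "x $ i \<le> (of_int (m $ i) + 1) * ?s"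
      using assms(3) by (auto simp: W mem_cube)
    ultimately have "(of_int (m $ i) - 1) * ?s < w $ i" "w $ i < (of_int (m $ i) + 2) * ?s"
      by (auto simp: algebra_simps abs_less_iff)
    then have "of_int (m $ i) - 1 < w $ i / ?s" "w $ i / ?s < of_int (m $ i) + 2"
      using s by (simp_all add: pos_less_divide_eq pos_divide_less_eq)
    then have "m $ i - 1 \<le> j $ i" "j $ i < m $ i + 2"
      by (simp_all add: j_def le_floor_iff floor_less_iff)
    then show ?thesis by linarith
  qed
  then have "cube e j \<subseteq> thicken e 1 W"
    unfolding W by (rule cube_subset_thicken_cube[OF assms(1)])
  then have "cube e j \<in> Icubes e C"
    using assms(2) cube_in_Qcubes[of e j] unfolding interior_cube_def by blast
  moreover have "w \<in> cube e j"
    unfolding j_def by (rule mem_cube_floor[OF assms(1)])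
  ultimately show ?thesis by blast
qed

lemma segment_meets_bdry:
  fixes Y C :: "(real ^ 'n::finite) set"
  assumes "0 < e" "finite C" "p \<in> C" "z \<in> Y" "z \<notin> C"
  shows "\<exists>t \<in> closed_segment p z. t \<in> bdry e Y C"
proof -
  let ?K = "\<Union> (Icubes e C)"
  have bdry_or_interior: "x \<in> bdry e Y C \<or> (\<exists>W. interior_cube e Y C W \<and> x \<in> W)" if "x \<in> ?K" for x
    using that unfolding bdry_def by blast
  have "p \<in> ?K"
    using mem_cube_floor[OF assms(1), of p] assms(3) cube_in_Qcubes by (auto simp: Icubes_def)
  show ?thesis
  proof (cases "z \<in> ?K")
    case True
    have "z \<notin> W" if "interior_cube e Y C W" for W
      using that assms(4,5) subset_thicken[of e W 1] assms(1) by (auto simp: interior_cube_def)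
    then show ?thesis using bdry_or_interior[OF True] by auto
  next
    case False
    have "closed_segment p z \<inter> frontier ?K \<noteq> {}"
      using \<open>p \<in> ?K\<close> False by (intro connected_Int_frontier) auto
    then obtain t where t: "t \<in> closed_segment p z" "t \<in> ?K" "t \<notin> interior ?K"
      using closed_Union_Icubes[OF assms(2,1)] by (auto simp: frontier_def)
    have "t \<notin> W" if "interior_cube e Y C W" for W
    proof
      assume "t \<in> W"
      then have "ball t (side_len e CARD('n)) \<subseteq> ?K"
        using near_interior_cube_in_Icubes[OF assms(1) that] by auto
      then show False using t(3) side_len_pos[OF assms(1)] by (auto simp: mem_interior)
    qed
    then show ?thesis using t bdry_or_interior by blast
  qed
qed

lemma interval_neighbour_cell:
  fixes s t w N :: real and j :: int
  assumes "0 < s" "0 \<le> N" "of_int j * s \<le> t" "t \<le> (of_int j + 1) * s" "\<bar>w - t\<bar> \<le> (N + 1) * s"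
  shows "\<exists>j' v. of_int j * s \<le> v \<and> v \<le> (of_int j + 1) * s \<and>
                of_int j' * s \<le> v \<and> v \<le> (of_int j' + 1) * s \<and>
                (of_int j' - N) * s \<le> w \<and> w \<le> (of_int j' + 1 + N) * s"
    (is "\<exists>j' v. ?P j' v")
proof -
  have Ns: "0 \<le> N * s" using assms(1,2) by simp
  note facts = assms(3,4) assms(5)[unfolded abs_le_iff] Ns
  have below: "?P (j - 1) (of_int j * s)" if "w < of_int j * s"
    using facts that by (simp add: algebra_simps del: mult_nonneg_nonneg)
  have above: "?P (j + 1) ((of_int j + 1) * s)" if "(of_int j + 1) * s < w"
    using facts that by (simp add: algebra_simps del: mult_nonneg_nonneg)
  have inside: "?P j w" if "of_int j * s \<le> w" "w \<le> (of_int j + 1) * s"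
    using facts that by (simp add: algebra_simps del: mult_nonneg_nonneg)
  show ?thesis using below above inside by (meson not_le)
qed

lemma dist_gt_of_notin_nbhd_bdry:
  fixes w t :: "real ^ 'n::finite"
  assumes "0 < e" "w \<notin> nbhd e N (bdry e Y C)"
    and "T \<in> Icubes e C" "\<not> interior_cube e Y C T" "t \<in> T"
  shows "(real N + 1) * side_len e CARD('n) < dist w t"
proof (rule ccontr)
  let ?s = "side_len e CARD('n)"
  assume "\<not> (real N + 1) * ?s < dist w t"
  then have close: "\<bar>w $ i - t $ i\<bar> \<le> (real N + 1) * ?s" for i
    using dist_vec_nth_le[of w i t] by (simp add: dist_real_def)
  have "T \<in> Qcubes e" using assms(3) by (simp add: Icubes_def)
  then obtain j where T: "T = cube e j" by (rule QcubesE)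
  have "\<forall>i. \<exists>j' v. of_int (j $ i) * ?s \<le> v \<and> v \<le> (of_int (j $ i) + 1) * ?s \<and>
                 of_int j' * ?s \<le> v \<and> v \<le> (of_int j' + 1) * ?s \<and>
                 (of_int j' - real N) * ?s \<le> w $ i \<and> w $ i \<le> (of_int j' + 1 + real N) * ?s"
  proof
    fix i
    have "of_int (j $ i) * ?s \<le> t $ i" "t $ i \<le> (of_int (j $ i) + 1) * ?s"
      using assms(5) by (simp_all add: T mem_cube)
    then show "\<exists>j' v. of_int (j $ i) * ?s \<le> v \<and> v \<le> (of_int (j $ i) + 1) * ?s \<and>
                 of_int j' * ?s \<le> v \<and> v \<le> (of_int j' + 1) * ?s \<and>
                 (of_int j' - real N) * ?s \<le> w $ i \<and> w $ i \<le> (of_int j' + 1 + real N) * ?s"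
      using interval_neighbour_cell[OF side_len_pos[OF assms(1)] of_nat_0_le_iff _ _ close] by blast
  qed
  then obtain J V where JV: "\<And>i. of_int (j $ i) * ?s \<le> V i \<and> V i \<le> (of_int (j $ i) + 1) * ?s \<and>
                 of_int (J i) * ?s \<le> V i \<and> V i \<le> (of_int (J i) + 1) * ?s \<and>
                 (of_int (J i) - real N) * ?s \<le> w $ i \<and> w $ i \<le> (of_int (J i) + 1 + real N) * ?s"
    by metis
  have "vec_lambda V \<in> bdry e Y C"
    using assms(3,4) JV by (auto simp: bdry_def T mem_cube)
  moreover have "vec_lambda V \<in> cube e (vec_lambda J)"
    using JV by (simp add: mem_cube)
  ultimately have "cube e (vec_lambda J) \<in> Icubes e (bdry e Y C)"
    using cube_in_Qcubes by (auto simp: Icubes_def)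
  moreover have "w \<in> thicken e N (cube e (vec_lambda J))"
    using JV by (simp add: mem_thicken_cube[OF assms(1)])
  ultimately show False using assms(2) by (auto simp: nbhd_def)
qed

section \<open>Cluster points whose neighbourhood survives the filter\<close>

lemma in_Ffilter_of_nbhd_bdry:
  "C \<in> Dstar k Y e \<Longrightarrow> y \<in> C \<Longrightarrow> y \<in> nbhd e (frakN CARD('n)) (bdry e Y C) \<Longrightarrow>
     y \<in> Ffilter k Y e"
  for Y :: "(real ^ 'n::finite) set"
  unfolding Ffilter_def by blast

definition ball_kept :: "nat \<Rightarrow> (real ^ 'n::finite) set \<Rightarrow> real \<Rightarrow> real ^ 'n \<Rightarrow> bool" where
  "ball_kept k Y e b \<longleftrightarrow> (\<forall>y\<in>Y. dist b y \<le> e \<longrightarrow> y \<in> Ffilter k Y e)"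

lemma ball_kept_in_boundary_cube:
  fixes Y :: "(real ^ 'n::finite) set"
  assumes "0 < e" "C \<in> Dstar k Y e" "T \<in> Icubes e C" "\<not> interior_cube e Y C T" "b \<in> T" "b \<in> C"
  shows "ball_kept k Y e b"
  unfolding ball_kept_def
proof (intro ballI impI)
  fix w assume w: "w \<in> Y" "dist b w \<le> e"
  let ?N = "frakN CARD('n)"
  show "w \<in> Ffilter k Y e"
  proof (cases "w \<in> core_pts k Y e")
    case True
    have "T \<in> Icubes e (bdry e Y C)"
      using assms(3-5) by (auto simp: Icubes_def bdry_def)
    moreover have "\<bar>w $ i - b $ i\<bar> \<le> real ?N * side_len e CARD('n)" for i
      using dist_vec_nth_le[of w i b] w(2) scale_le_frakN_side_len[OF assms(1), where 'n='n]
      by (simp add: dist_real_def dist_commute)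
    then have "w \<in> thicken e ?N T" using assms(5) by (auto simp: thicken_def)
    ultimately have "w \<in> nbhd e ?N (bdry e Y C)" by (auto simp: nbhd_def)
    with assms(2) Dstar_closed[OF assms(2,6) True w(2)] show ?thesis
      by (rule in_Ffilter_of_nbhd_bdry)
  next
    case False
    with w(1) show ?thesis by (rule noise_in_Ffilter)
  qed
qed

lemma core_pts_Ffilter_near_ball_kept:
  assumes "finite Y" "b \<in> core_pts k Y e" "ball_kept k Y e b"
    and "q \<in> Ffilter k Y e" "dist q b + e \<le> a"
  shows "q \<in> core_pts k (Ffilter k Y e) a"
proof -
  have "{y \<in> Y. dist b y \<le> e} \<subseteq> {y \<in> Ffilter k Y e. dist q y \<le> a}"
  proof
    fix y assume y: "y \<in> {y \<in> Y. dist b y \<le> e}"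
    then have "y \<in> Ffilter k Y e" using assms(3) by (simp add: ball_kept_def)
    moreover have "dist q y \<le> a" using dist_triangle[of q y b] y assms(5) by simp
    ultimately show "y \<in> {y \<in> Ffilter k Y e. dist q y \<le> a}" by simp
  qed
  then have "card {y \<in> Y. dist b y \<le> e} \<le> card {y \<in> Ffilter k Y e. dist q y \<le> a}"
    using finite_subset[OF Ffilter_subset assms(1)] by (intro card_mono) auto
  then show ?thesis using assms(2,4) by (simp add: core_pts_def)
qed

lemma exists_ball_kept_closer:
  fixes Y :: "(real ^ 'n::finite) set"
  assumes "0 < e" "finite Y" "C \<in> Dstar k Y e" "w \<in> C"
    and "w \<notin> nbhd e (frakN CARD('n)) (bdry e Y C)" "p \<in> C" "z \<in> Y" "z \<notin> C"
  shows "\<exists>b\<in>C. ball_kept k Y e b \<and> dist z b + e < dist z p + dist p w"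
proof -
  let ?s = "side_len e CARD('n)"
  have "finite C" using Dstar_subset[OF assms(3)] assms(2) by (rule finite_subset)
  obtain t where t: "t \<in> closed_segment p z" "t \<in> bdry e Y C"
    using segment_meets_bdry[OF assms(1) \<open>finite C\<close> assms(6-8)] by blast
  then obtain T where T: "T \<in> Icubes e C" "\<not> interior_cube e Y C T" "t \<in> T"
    by (auto simp: bdry_def)
  then obtain b where b: "b \<in> T" "b \<in> C" by (auto simp: Icubes_def)
  have "T \<in> Qcubes e" using T(1) by (simp add: Icubes_def)
  then obtain j where "T = cube e j" by (rule QcubesE)
  then have "dist t b \<le> sqrt (real CARD('n)) * ?s"
    using dist_le_in_cube[of t e j b] T(3) b(1) assms(1) by simp
  moreover have "(real (frakN CARD('n)) + 1) * ?s < dist w t"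
    by (rule dist_gt_of_notin_nbhd_bdry[OF assms(1,5) T])
  moreover have "dist p z = dist p t + dist t z"
    using t(1) by (simp add: between_mem_segment[symmetric] between)
  moreover have "dist z b \<le> dist z t + dist t b" "dist w t \<le> dist w p + dist p t"
    by (rule dist_triangle)+
  ultimately have "dist z b + e < dist z p + dist p w"
    using scale_plus_diam_le_frakN_side_len[OF assms(1), where 'n='n] by (simp add: dist_commute)
  then show ?thesis
    using ball_kept_in_boundary_cube[OF assms(1,3) T(1,2) b] b(2) by blast
qed

lemma exists_survivor_not_farther:
  fixes Y :: "(real ^ 'n::finite) set"
  assumes "0 < e" "e \<le> a" "finite Y" "C \<in> Dstar k Y e" "p \<in> C" "z \<in> Y" "z \<notin> C"
  shows "\<exists>b\<in>C. b \<in> core_pts k (Ffilter k Y e) a \<and> dist z b \<le> dist z p"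
proof -
  have "\<exists>b\<in>C. ball_kept k Y e b \<and> dist z b \<le> dist z p"
  proof (cases "ball_kept k Y e p")
    case False
    then obtain w where w: "w \<in> Y" "dist p w \<le> e" "w \<notin> Ffilter k Y e"
      by (auto simp: ball_kept_def)
    then have "w \<in> C"
      using Dstar_closed[OF assms(4,5)] noise_in_Ffilter by blast
    moreover have "w \<notin> nbhd e (frakN CARD('n)) (bdry e Y C)"
      using in_Ffilter_of_nbhd_bdry[OF assms(4) \<open>w \<in> C\<close>] w(3) by blast
    ultimately show ?thesis
      using exists_ball_kept_closer[OF assms(1,3,4) _ _ assms(5-7)] w(2) by fastforce
  qed (use assms(5) in blast)
  then obtain b where b: "b \<in> C" "ball_kept k Y e b" "dist z b \<le> dist z p" by blast
  have "b \<in> core_pts k Y e" using b(1) Dstar_subset_core_pts[OF assms(4)] by blast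
  moreover have "b \<in> Ffilter k Y e"
    using b(2) calculation assms(1) by (simp add: ball_kept_def core_pts_def)
  ultimately have "b \<in> core_pts k (Ffilter k Y e) a"
    using core_pts_Ffilter_near_ball_kept[OF assms(3) _ b(2)] assms(2) by simp
  then show ?thesis using b(1,3) by blast
qed

lemma core_pts_Ffilter_of_noise:
  fixes Y :: "(real ^ 'n::finite) set"
  assumes "0 < e" "finite Y" "q \<in> core_pts k Y a" "q \<notin> core_pts k Y e"
  shows "q \<in> core_pts k (Ffilter k Y e) a"
proof -
  have q: "q \<in> Ffilter k Y e"
    using assms(3,4) by (intro noise_in_Ffilter) (auto simp: core_pts_def)
  show ?thesis
  proof (cases "\<forall>y\<in>Y. dist q y \<le> a \<longrightarrow> y \<in> Ffilter k Y e")
    case True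
    then have "{y \<in> Ffilter k Y e. dist q y \<le> a} = {y \<in> Y. dist q y \<le> a}"
      using Ffilter_subset by blast
    then show ?thesis using assms(3) q by (simp add: core_pts_def)
  next
    case False
    then obtain y where y: "y \<in> Y" "dist q y \<le> a" "y \<notin> Ffilter k Y e" by blast
    then have "y \<in> core_pts k Y e" using noise_in_Ffilter by blast
    let ?C = "cluster_of k Y e y"
    have C: "?C \<in> Dstar k Y e" "y \<in> ?C" "q \<notin> ?C"
      using \<open>y \<in> core_pts k Y e\<close> assms(4) by (auto intro: cluster_of_in_Dstar)
    have "y \<notin> nbhd e (frakN CARD('n)) (bdry e Y ?C)"
      using in_Ffilter_of_nbhd_bdry[OF C(1,2)] y(3) by blast
    then obtain b where b: "b \<in> ?C" "ball_kept k Y e b" "dist q b + e < dist q y"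
      using exists_ball_kept_closer[OF assms(1,2) C(1,2) _ C(2) _ C(3)] assms(3)
      by (auto simp: core_pts_def)
    then show ?thesis
      using core_pts_Ffilter_near_ball_kept[OF assms(2) _ b(2) q] b y(2) by (auto simp: core_pts_def)
  qed
qed

context
  fixes Y :: "(real ^ 'n::finite) set" and G :: "(real ^ 'n) wgraph" and k :: nat and e a :: real
  assumes e_pos: "0 < e" and e_le: "e \<le> a" and finite_Y: "finite Y"
    and cluster_conn: "\<And>C u v. C \<in> Dstar k Y e \<Longrightarrow> u \<in> C \<Longrightarrow> v \<in> C \<Longrightarrow> same_comp G a u v"
    and survivors_conn: "\<And>u v. u \<in> core_pts k (Ffilter k Y e) a \<Longrightarrow> v \<in> core_pts k (Ffilter k Y e) a \<Longrightarrow>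
                 u \<noteq> v \<Longrightarrow> dist u v \<le> a \<Longrightarrow> same_comp G a u v"
begin

lemma same_comp_from_core_across_filter:
  assumes u: "u \<in> core_pts k Y e"
    and v: "v \<in> Y" "v \<in> core_pts k Y e \<or> v \<in> core_pts k (Ffilter k Y e) a" "dist u v \<le> a"
  shows "same_comp G a u v"
proof -
  let ?C = "cluster_of k Y e u"
  have C: "?C \<in> Dstar k Y e" "u \<in> ?C" using u by (auto intro: cluster_of_in_Dstar)
  show ?thesis
  proof (cases "v \<in> ?C")
    case True
    then show ?thesis using cluster_conn C by blast
  next
    case False
    obtain b where b: "b \<in> ?C" "b \<in> core_pts k (Ffilter k Y e) a" "dist v b \<le> dist v u"
      using exists_survivor_not_farther[OF e_pos e_le finite_Y C v(1) False] by blast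
    have "b \<noteq> v" using b(1) False by blast
    have "dist b v \<le> a" using b(3) v(3) by (simp add: dist_commute)
    have "same_comp G a u b" using cluster_conn[OF C b(1)] .
    moreover have "same_comp G a b v"
    proof (cases "v \<in> core_pts k (Ffilter k Y e) a")
      case True
      show ?thesis by (rule survivors_conn[OF b(2) True \<open>b \<noteq> v\<close> \<open>dist b v \<le> a\<close>])
    next
      case v_removed: False
      let ?C' = "cluster_of k Y e v"
      have C': "?C' \<in> Dstar k Y e" "v \<in> ?C'" using v(2) v_removed by (auto intro: cluster_of_in_Dstar)
      have "b \<notin> ?C'" using Dstar_eq[OF C(1) C'(1) b(1)] C'(2) False by blast
      moreover have "b \<in> Y" using b(1) Dstar_subset[OF C(1)] by blast
      ultimately obtain b' where b': "b' \<in> ?C'" "b' \<in> core_pts k (Ffilter k Y e) a" "dist b b' \<le> dist b v"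
        using exists_survivor_not_farther[OF e_pos e_le finite_Y C'] by blast
      have "b \<noteq> b'" using b'(1) \<open>b \<notin> ?C'\<close> by blast
      have "same_comp G a b b'"
        by (rule survivors_conn[OF b(2) b'(2) \<open>b \<noteq> b'\<close>]) (use b'(3) \<open>dist b v \<le> a\<close> in linarith)
      moreover have "same_comp G a b' v" using cluster_conn[OF C'(1) b'(1) C'(2)] .
      ultimately show ?thesis by (rule same_comp_trans)
    qed
    ultimately show ?thesis by (rule same_comp_trans)
  qed
qed

lemma same_comp_across_filter:
  assumes "u \<in> core_pts k Y a" "v \<in> core_pts k Y a" "u \<noteq> v" "dist u v \<le> a"
  shows "same_comp G a u v"
proof -
  have Y: "u \<in> Y" "v \<in> Y" using assms(1,2) by (auto simp: core_pts_def)
  consider "u \<in> core_pts k Y e" | "v \<in> core_pts k Y e" | "u \<notin> core_pts k Y e" "v \<notin> core_pts k Y e"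
    by blast
  then show ?thesis
  proof cases
    case 1
    have "v \<in> core_pts k Y e \<or> v \<in> core_pts k (Ffilter k Y e) a"
      using core_pts_Ffilter_of_noise[OF e_pos finite_Y assms(2)] by blast
    then show ?thesis by (rule same_comp_from_core_across_filter[OF 1 Y(2) _ assms(4)])
  next
    case 2
    have "u \<in> core_pts k Y e \<or> u \<in> core_pts k (Ffilter k Y e) a"
      using core_pts_Ffilter_of_noise[OF e_pos finite_Y assms(1)] by blast
    then have "same_comp G a v u"
      by (rule same_comp_from_core_across_filter[OF 2 Y(1)]) (simp add: dist_commute assms(4))
    then show ?thesis by (rule same_comp_sym)
  next
    case 3
    show ?thesis
      by (rule survivors_conn[OF core_pts_Ffilter_of_noise[OF e_pos finite_Y assms(1) 3(1)]
            core_pts_Ffilter_of_noise[OF e_pos finite_Y assms(2) 3(2)] assms(3,4)])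
  qed
qed

end

section \<open>Connectivity through the construction\<close>

lemma snd_Hgraph_Suc_le: "snd (Hgraph k eps X (Suc m)) x y \<le> snd (Hgraph k eps X m) x y"
  by (simp add: Hgraph_Suc)

lemma snd_Fgraph_le_Hgraph: "snd (Fgraph k eps X m) x y \<le> snd (Hgraph k eps X m) x y"
  by (simp add: Fgraph_def)

lemma snd_Fgraph_le_rho:
  "x \<in> Xs k eps X m \<Longrightarrow> y \<in> Xs k eps X m \<Longrightarrow> x \<noteq> y \<Longrightarrow>
     snd (Fgraph k eps X m) x y \<le> rho k (Xs k eps X m) x y"
  by (simp add: Fgraph_def snd_complete_graph)

lemma Fgraph_edge_cases:
  assumes "snd (Fgraph k eps X m) x y \<le> ereal a"
  shows "snd (Hgraph k eps X m) x y \<le> ereal a \<or>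
         (x \<in> Xs k eps X m \<and> y \<in> Xs k eps X m \<and> x \<noteq> y \<and> rho k (Xs k eps X m) x y \<le> ereal a)"
  using assms by (auto simp: Fgraph_def snd_complete_graph min_le_iff_disj split: if_splits)

lemma core_pts_Bset:
  assumes "u \<in> C" "0 \<le> a" "a \<le> e" "u \<in> core_pts k Y a"
  shows "u \<in> core_pts k (Bset Y e C) a"
proof -
  have "infdist y C \<le> e" if "dist u y \<le> a" for y
    using infdist_le[OF assms(1), of y] that assms(3) by (simp add: dist_commute)
  then have "{y \<in> Bset Y e C. dist u y \<le> a} = {y \<in> Y. dist u y \<le> a}"
    by (auto simp: Bset_def)
  moreover have "u \<in> Bset Y e C" using assms by (simp add: Bset_def core_pts_def)
  ultimately show ?thesis using assms(4) by (simp add: core_pts_def)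
qed

lemma snd_cluster_graph_le:
  assumes "finite Y" "u \<in> C" "v \<in> C" "u \<noteq> v" "a \<le> e"
    and "u \<in> core_pts k Y a" "v \<in> core_pts k Y a" "dist u v \<le> a"
  shows "snd (cluster_graph k Y e C) u v \<le> ereal a"
proof -
  have "0 \<le> a" using assms(8) zero_le_dist order_trans by blast
  then have core: "u \<in> core_pts k (Bset Y e C) a" "v \<in> core_pts k (Bset Y e C) a"
    using core_pts_Bset assms(2,3,5-7) by blast+
  then have B: "u \<in> Bset Y e C" "v \<in> Bset Y e C" by (simp_all add: core_pts_def)
  have "finite (Bset Y e C)" using Bset_subset assms(1) by (rule finite_subset)
  then have "rho k (Bset Y e C) u v \<le> ereal a"
    using rho_le_iff_core_pts B assms(4,8) core by blast
  moreover from this have "rho k (Bset Y e C) u v \<le> ereal e" using assms(5) order_trans by fastforce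
  ultimately show ?thesis
    using B assms(4) by (auto simp: cluster_graph_def snd_trunc_graph snd_complete_graph)
qed

lemma snd_Hgraph_Suc_le_in_cluster:
  assumes "finite X" "C \<in> Dstar k (Xs k eps X m) (eps (Suc m))" "u \<in> C" "v \<in> C" "u \<noteq> v"
    and "a \<le> eps (Suc m)" "u \<in> core_pts k (Xs k eps X m) a" "v \<in> core_pts k (Xs k eps X m) a"
    and "dist u v \<le> a"
  shows "snd (Hgraph k eps X (Suc m)) u v \<le> ereal a"
proof -
  let ?G = "cluster_graph k (Xs k eps X m) (eps (Suc m))"
  have "snd (Hgraph k eps X (Suc m)) u v \<le> (INF C' \<in> Dstar k (Xs k eps X m) (eps (Suc m)). snd (?G C') u v)"
    by (simp add: Hgraph_Suc image_image)
  also have "\<dots> \<le> snd (?G C) u v" using assms(2) by (rule INF_lower)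
  also have "\<dots> \<le> ereal a"
    using snd_cluster_graph_le[OF finite_Xs[OF assms(1), of k eps m] assms(3-9)] .
  finally show ?thesis .
qed

lemma same_comp_Hgraph_Suc_in_cluster:
  assumes "finite X" "0 < eps (Suc m)" "C \<in> Dstar k (Xs k eps X m) (eps (Suc m))" "x \<in> C" "y \<in> C"
  shows "same_comp (Hgraph k eps X (Suc m)) (eps (Suc m)) x y"
proof -
  have CX: "C \<subseteq> X" using Dstar_subset[OF assms(3)] Xs_subset by blast
  have "(x, y) \<in> (core_graph_rel k (Xs k eps X m) (eps (Suc m)))\<^sup>*"
    by (rule Dstar_connected[OF assms(3-5)])
  then show ?thesis
  proof (induction rule: rtrancl_induct)
    case base
    show ?case using assms(4) CX by (intro same_comp_refl) auto
  next
    case (step u v)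
    have "u \<in> C" "v \<in> C"
      using Dstar_closed_rtrancl[OF assms(3,4)] step(1,2) by (blast intro: rtrancl_into_rtrancl)+
    moreover have "u \<in> core_pts k (Xs k eps X m) (eps (Suc m))" "v \<in> core_pts k (Xs k eps X m) (eps (Suc m))"
      "u \<noteq> v" "dist u v \<le> eps (Suc m)"
      using step(2) by (auto simp: core_graph_rel_def)
    ultimately have "snd (Hgraph k eps X (Suc m)) u v \<le> ereal (eps (Suc m))"
      by (intro snd_Hgraph_Suc_le_in_cluster[OF assms(1,3)]) auto
    then have "same_comp (Hgraph k eps X (Suc m)) (eps (Suc m)) u v"
      using \<open>u \<in> C\<close> \<open>v \<in> C\<close> \<open>u \<noteq> v\<close> CX by (intro same_comp_edge) auto
    with step.IH show ?case by (rule same_comp_trans)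
  qed
qed

lemma snd_Hgraph_Suc_le_of_rho_le:
  assumes "finite X" "0 < eps (Suc m)" "a \<le> eps (Suc m)"
    and "u \<in> Xs k eps X m" "v \<in> Xs k eps X m" "u \<noteq> v" "rho k (Xs k eps X m) u v \<le> ereal a"
  shows "snd (Hgraph k eps X (Suc m)) u v \<le> ereal a"
proof -
  let ?Y = "Xs k eps X m" and ?e = "eps (Suc m)"
  have core: "u \<in> core_pts k ?Y a" "v \<in> core_pts k ?Y a" "dist u v \<le> a"
    using rho_le_iff_core_pts[OF finite_Xs[OF assms(1), of k eps m] assms(4-6)] assms(7) by auto
  then have core_e: "u \<in> core_pts k ?Y ?e" "v \<in> core_pts k ?Y ?e"
    using core_pts_mono_radius[OF finite_Xs[OF assms(1), of k eps m] assms(3), of k] by blast+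
  let ?C = "cluster_of k ?Y ?e u"
  have C: "?C \<in> Dstar k ?Y ?e" "u \<in> ?C" using core_e(1) by (auto intro: cluster_of_in_Dstar)
  have "dist u v \<le> ?e" using core(3) assms(3) by linarith
  then have "v \<in> ?C" by (rule Dstar_closed[OF C core_e(2)])
  then show ?thesis using snd_Hgraph_Suc_le_in_cluster[OF assms(1) C(1,2) _ assms(6,3) core] by blast
qed

lemma snd_Hgraph_Suc_le_of_Fgraph:
  assumes "finite X" "0 < eps (Suc m)" "a \<le> eps (Suc m)" "snd (Fgraph k eps X m) u v \<le> ereal a"
  shows "snd (Hgraph k eps X (Suc m)) u v \<le> ereal a"
  using Fgraph_edge_cases[OF assms(4)]
proof
  assume "snd (Hgraph k eps X m) u v \<le> ereal a"
  then show ?thesis by (rule order_trans[OF snd_Hgraph_Suc_le])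
next
  assume "u \<in> Xs k eps X m \<and> v \<in> Xs k eps X m \<and> u \<noteq> v \<and> rho k (Xs k eps X m) u v \<le> ereal a"
  then show ?thesis using snd_Hgraph_Suc_le_of_rho_le[where eps = eps and m = m, OF assms(1-3)] by blast
qed

lemma same_comp_Hgraph_Suc_of_Fgraph:
  assumes "finite X" "0 < eps (Suc m)" "a \<le> eps (Suc m)" "same_comp (Fgraph k eps X m) a x y"
  shows "same_comp (Hgraph k eps X (Suc m)) a x y"
proof (rule same_comp_by_edges[OF _ _ assms(4)])
  fix u v assume uv: "u \<in> fst (Fgraph k eps X m)" "v \<in> fst (Fgraph k eps X m)" "u \<noteq> v"
    and "snd (Fgraph k eps X m) u v \<le> ereal a"
  then have "snd (Hgraph k eps X (Suc m)) u v \<le> ereal a"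
    by (intro snd_Hgraph_Suc_le_of_Fgraph[where eps = eps and m = m, OF assms(1-3)])
  then show "same_comp (Hgraph k eps X (Suc m)) a u v" using uv by (intro same_comp_edge) auto
qed simp

lemma same_comp_Fgraph_Suc_of_rho_le:
  assumes "finite X" "0 < eps (Suc m)" "eps (Suc m) \<le> a"
    and "u \<in> Xs k eps X m" "v \<in> Xs k eps X m" "u \<noteq> v" "rho k (Xs k eps X m) u v \<le> ereal a"
  shows "same_comp (Fgraph k eps X (Suc m)) a u v"
proof (rule same_comp_across_filter[OF assms(2,3) finite_Xs[OF assms(1), of k eps m]])
  fix C u v assume "C \<in> Dstar k (Xs k eps X m) (eps (Suc m))" "u \<in> C" "v \<in> C"
  then have "same_comp (Hgraph k eps X (Suc m)) (eps (Suc m)) u v"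
    by (rule same_comp_Hgraph_Suc_in_cluster[where eps = eps and m = m, OF assms(1,2)])
  then show "same_comp (Fgraph k eps X (Suc m)) a u v"
    by (rule same_comp_subgraph[rotated 2, OF assms(3)]) (simp_all add: snd_Fgraph_le_Hgraph)
next
  let ?Y' = "Ffilter k (Xs k eps X m) (eps (Suc m))"
  fix u v assume uv: "u \<in> core_pts k ?Y' a" "v \<in> core_pts k ?Y' a" "u \<noteq> v" "dist u v \<le> a"
  have Y': "Xs k eps X (Suc m) = ?Y'" by simp
  have uv_in: "u \<in> ?Y'" "v \<in> ?Y'" using uv by (simp_all add: core_pts_def)
  then have "rho k ?Y' u v \<le> ereal a"
    using rho_le_iff_core_pts[OF finite_Xs[of X k eps "Suc m", unfolded Y'] _ _ uv(3)] assms(1) uv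
    by blast
  then have "snd (Fgraph k eps X (Suc m)) u v \<le> ereal a"
    by (rule order_trans[OF snd_Fgraph_le_rho[of u k eps X "Suc m" v, unfolded Y', OF uv_in uv(3)]])
  moreover have "u \<in> X" "v \<in> X" using uv_in Xs_subset[of k eps X "Suc m"] by (simp_all add: subset_iff)
  ultimately show "same_comp (Fgraph k eps X (Suc m)) a u v"
    using uv(3) by (intro same_comp_edge) auto
qed (use rho_le_iff_core_pts[OF finite_Xs[OF assms(1), of k eps m] assms(4-6)] assms(6,7) in auto)

lemma same_comp_Fgraph_Suc:
  assumes "finite X" "0 < eps (Suc m)" "same_comp (Fgraph k eps X m) a x y"
  shows "same_comp (Fgraph k eps X (Suc m)) a x y"
proof (cases "eps (Suc m) \<le> a")
  case True
  show ?thesis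
  proof (rule same_comp_by_edges[OF _ _ assms(3)])
    fix u v assume uv: "u \<in> fst (Fgraph k eps X m)" "v \<in> fst (Fgraph k eps X m)" "u \<noteq> v"
      and "snd (Fgraph k eps X m) u v \<le> ereal a"
    then consider "snd (Hgraph k eps X m) u v \<le> ereal a"
      | "u \<in> Xs k eps X m" "v \<in> Xs k eps X m" "rho k (Xs k eps X m) u v \<le> ereal a"
      using Fgraph_edge_cases by blast
    then show "same_comp (Fgraph k eps X (Suc m)) a u v"
    proof cases
      case 1
      then have "snd (Fgraph k eps X (Suc m)) u v \<le> ereal a"
        by (intro order_trans[OF snd_Fgraph_le_Hgraph order_trans[OF snd_Hgraph_Suc_le]])
      then show ?thesis using uv by (intro same_comp_edge) auto
    next
      case 2
      then show ?thesis
        by (intro same_comp_Fgraph_Suc_of_rho_le[where eps = eps and m = m, OF assms(1,2) True _ _ uv(3)])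
    qed
  qed simp
next
  case False
  then have "same_comp (Hgraph k eps X (Suc m)) a x y"
    by (intro same_comp_Hgraph_Suc_of_Fgraph[where eps = eps and m = m, OF assms(1,2) _ assms(3)]) simp
  then show ?thesis
    by (rule same_comp_subgraph[rotated 3]) (simp_all add: snd_Fgraph_le_Hgraph)
qed

lemma same_comp_Fgraph_of_complete:
  assumes "finite X" "eps 0 = 0" "strict_mono eps"
    and "same_comp (complete_graph X (rho k X)) a p q"
  shows "same_comp (Fgraph k eps X m) a p q"
proof (induction m)
  case 0
  show ?case by (rule same_comp_subgraph[OF _ _ order_refl assms(4)]) (simp_all add: Fgraph_def)
next
  case (Suc m)
  have "0 < eps (Suc m)" using strict_monoD[OF assms(3), of 0 "Suc m"] assms(2) by simp
  then show ?case using same_comp_Fgraph_Suc[OF assms(1) _ Suc.IH] by blast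
qed

theorem theorem5p10:
  fixes X :: "(real ^ 'n::finite) set" and k :: nat and eps :: "nat \<Rightarrow> real"
    and i :: nat and \<nu> \<alpha> :: real and p q :: "real ^ 'n"
  assumes "CARD('n) \<ge> 2"
    and "finite X"
    and "eps 0 = 0" and "strict_mono eps"
    and "i \<ge> 1"
    and "eps (i - 1) < \<nu>" and "\<nu> \<le> eps i"
    and "\<alpha> \<ge> 0"
    and "p \<in> X" and "q \<in> X" and "p \<noteq> q"
  shows "(same_comp (Hgraph k eps X i) \<nu> p q \<longleftrightarrow>
            same_comp (complete_graph X (rho k X)) \<nu> p q)
       \<and> (same_comp (Fgraph k eps X i) \<alpha> p q \<longleftrightarrow>
            same_comp (complete_graph X (rho k X)) \<alpha> p q)"
proof -
  obtain j where i: "i = Suc j" using assms(5) by (cases i) auto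
  have pos: "0 < eps (Suc j)" using strict_monoD[OF assms(4), of 0 "Suc j"] assms(3) by simp
  note complete_of = same_comp_complete_graph_of_le[where w = "rho k X"]
  note to_F = same_comp_Fgraph_of_complete[OF assms(2-4)]
  have "same_comp (Hgraph k eps X i) \<nu> p q \<longleftrightarrow> same_comp (complete_graph X (rho k X)) \<nu> p q"
    using complete_of[OF fst_Hgraph rho_le_snd_Hgraph[OF assms(2)]] to_F
      same_comp_Hgraph_Suc_of_Fgraph[where eps = eps and m = j, OF assms(2) pos] assms(7) i by blast
  moreover have "same_comp (Fgraph k eps X i) \<alpha> p q \<longleftrightarrow> same_comp (complete_graph X (rho k X)) \<alpha> p q"
    using complete_of[OF fst_Fgraph rho_le_snd_Fgraph[OF assms(2)]] to_F by blast
  ultimately show ?thesis ..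
qed

end
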